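(* Let $D\subseteq\mathbb{R}^3\setminus\{0\}$ be open and $\vec\mu:D\to\mathbb{R}^3$ smooth (depending only on $\vec\gamma$), regarded as a function on $\mathbb{R}^3\times D$. Then $\Pi_{\vec\mu}$ defines a Poisson bracket if and only if $\vec\gamma\cdot\operatorname{curl}_{\vec\gamma}\vec\mu=0$ on $D$, which is equivalent to $\operatorname{div}_{\vec\gamma}(\vec\gamma\times\vec\mu(\vec\gamma))=0$ on $D$.
   Context: Coordinates on $\mathbb{R}^6$ are $(\vec M,\vec\gamma)=(M_1,M_2,M_3,\gamma_1,\gamma_2,\gamma_3)$. For a smooth $\vec\mu=(\mu_1,\mu_2,\mu_3)$ of $(\vec M,\vec\gamma)$, $\Pi_{\vec\mu}$ is the skew-symmetric $6\times6$ matrix $$\Pi_{\vec\mu}=\begin{bmatrix}0&-M_3-\mu_3&M_2+\mu_2&0&-\gamma_3&\gamma_2\\ M_3+\mu_3&0&-M_1-\mu_1&\gamma_3&0&-\gamma_1\\ -M_2-\mu_2&M_1+\mu_1&0&-\gamma_2&\gamma_1&0\\ 0&-\gamma_3&\gamma_2&0&0&0\\ \gamma_3&0&-\gamma_1&0&0&0\\ -\gamma_2&\gamma_1&0&0&0&0\end{bmatrix},$$ and it "defines a Poisson bracket" if $\{f,g\}_{\vec\mu}=(\nabla f)^T\Pi_{\vec\mu}\nabla g$ satisfies the Jacobi identity. *)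

theory Defs
  imports "HOL-Analysis.Analysis" "HOL-Analysis.Cross3"
begin

definition partial :: "'n::finite \<Rightarrow> (real^'n \<Rightarrow> real) \<Rightarrow> real^'n \<Rightarrow> real" where
  "partial i f x = deriv (\<lambda>t. f (x + t *\<^sub>R axis i 1)) 0"

fun iter_partial :: "'n::finite list \<Rightarrow> (real^'n \<Rightarrow> real) \<Rightarrow> real^'n \<Rightarrow> real" where
  "iter_partial [] f = f"
| "iter_partial (i # is) f = partial i (iter_partial is f)"

definition smooth_on :: "(real^'n::finite) set \<Rightarrow> (real^'n \<Rightarrow> real) \<Rightarrow> bool" where
  "smooth_on U f \<longleftrightarrow>
     (\<forall>is. continuous_on U (iter_partial is f) \<and>
        (\<forall>i. \<forall>x\<in>U. (\<lambda>t. iter_partial is f (x + t *\<^sub>R axis i 1)) differentiable (at 0)))"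

definition grad :: "(real^'n::finite \<Rightarrow> real) \<Rightarrow> real^'n \<Rightarrow> real^'n" where
  "grad f x = (\<chi> i. partial i f x)"

text \<open>Coordinates on R^6: x = (M1,M2,M3,gamma1,gamma2,gamma3) = (x$1,...,x$6).\<close>
definition Mv :: "real^6 \<Rightarrow> real^3" where
  "Mv x = vector [x$1, x$2, x$3]"

definition gv :: "real^6 \<Rightarrow> real^3" where
  "gv x = vector [x$4, x$5, x$6]"

definition Pi_mu :: "(real^3 \<Rightarrow> real^3) \<Rightarrow> real^6 \<Rightarrow> real^6^6" where
  "Pi_mu mu x =
    (let M1 = x$1; M2 = x$2; M3 = x$3; g1 = x$4; g2 = x$5; g3 = x$6;
         m = mu (gv x); m1 = m$1; m2 = m$2; m3 = m$3 in
     vector [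
      vector [0, -M3-m3, M2+m2, 0, -g3, g2],
      vector [M3+m3, 0, -M1-m1, g3, 0, -g1],
      vector [-M2-m2, M1+m1, 0, -g2, g1, 0],
      vector [0, -g3, g2, 0, 0, 0],
      vector [g3, 0, -g1, 0, 0, 0],
      vector [-g2, g1, 0, 0, 0, 0]])"

definition pbracket :: "(real^3 \<Rightarrow> real^3) \<Rightarrow> (real^6 \<Rightarrow> real) \<Rightarrow> (real^6 \<Rightarrow> real) \<Rightarrow> real^6 \<Rightarrow> real" where
  "pbracket mu f g x = grad f x \<bullet> (Pi_mu mu x *v grad g x)"

definition defines_poisson :: "(real^3 \<Rightarrow> real^3) \<Rightarrow> (real^3) set \<Rightarrow> bool" where
  "defines_poisson mu D \<longleftrightarrow>
     (\<forall>f g h. smooth_on {x. gv x \<in> D} f \<and> smooth_on {x. gv x \<in> D} g \<and> smooth_on {x. gv x \<in> D} h \<longrightarrow>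
        (\<forall>x. gv x \<in> D \<longrightarrow>
           pbracket mu f (pbracket mu g h) x + pbracket mu g (pbracket mu h f) x
           + pbracket mu h (pbracket mu f g) x = 0))"

definition curl3 :: "(real^3 \<Rightarrow> real^3) \<Rightarrow> real^3 \<Rightarrow> real^3" where
  "curl3 F y = vector [
     partial 2 (\<lambda>z. F z $ 3) y - partial 3 (\<lambda>z. F z $ 2) y,
     partial 3 (\<lambda>z. F z $ 1) y - partial 1 (\<lambda>z. F z $ 3) y,
     partial 1 (\<lambda>z. F z $ 2) y - partial 2 (\<lambda>z. F z $ 1) y]"

definition div3 :: "(real^3 \<Rightarrow> real^3) \<Rightarrow> real^3 \<Rightarrow> real" where
  "div3 F y = (\<Sum>i\<in>UNIV. partial i (\<lambda>z. F z $ i) y)"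

end

theory Submission
  imports Defs
begin

(* For any bracket {f,g}(x) = grad f(x) . P(x) grad g(x) with P(x) skew,
   differentiating the inner bracket in {f,{g,h}} produces terms with second
   derivatives of g and h and a term with the derivative dP of P.  When the Hessians
   are symmetric (Schwarz), the second-derivative terms cancel in the cyclic sum, and
   the Jacobiator becomes the trilinear form
       sum_{c,a,b} f_c g_a h_b S(c,a,b),   S(c,a,b) = sum_l P_cl dP_l,ab + cyclic.
   For Pi_mu = Lie-Poisson matrix of se(3)* at (M + mu(gamma), gamma), an explicit
   computation gives S(1,2,3) = - gamma . curl mu, and every entry of S vanishes when
   gamma . curl mu = 0.  Testing the Jacobi identity on the coordinates M1, M2, M3
   yields the converse.  Finally div(gamma x mu) = - gamma . curl mu. *)


lemma partial_eqI:
  assumes "((\<lambda>t. f (x + t *\<^sub>R axis i 1)) has_real_derivative D) (at 0)"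
  shows "partial i f x = D"
  using assms by (simp add: partial_def DERIV_imp_deriv)

lemma has_partial:
  assumes "(\<lambda>t. f (x + t *\<^sub>R axis i 1)) differentiable (at 0)"
  shows "((\<lambda>t. f (x + t *\<^sub>R axis i 1)) has_real_derivative partial i f x) (at 0)"
  using assms by (simp add: partial_def DERIV_deriv_iff_real_differentiable)

lemma has_partial_along_line:
  fixes f :: "real^'n \<Rightarrow> real"
  assumes "(\<lambda>t. f (z + s *\<^sub>R axis i 1 + t *\<^sub>R axis i 1)) differentiable (at 0)"
  shows "((\<lambda>s. f (z + s *\<^sub>R axis i 1)) has_real_derivative partial i f (z + s *\<^sub>R axis i 1)) (at s)"
proof -
  have "((\<lambda>t. f (z + (t + s) *\<^sub>R axis i 1)) has_real_derivative partial i f (z + s *\<^sub>R axis i 1)) (at 0)"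
    using has_partial[OF assms] by (simp add: algebra_simps)
  then show ?thesis
    using DERIV_shift[of "\<lambda>s. f (z + s *\<^sub>R axis i 1)" _ 0 s] by simp
qed

(* Two applications of the mean value theorem: the second difference of f over the
   square with corners x, x + h e_i, x + h e_j, x + h e_i + h e_j equals h^2 times the
   mixed partial d_j d_i f at some interior point of the square. *)
lemma mixed_difference_mvt:
  fixes f :: "real^'n \<Rightarrow> real" and x :: "real^'n" and i j :: 'n and h :: real
  defines "p \<equiv> \<lambda>s t. x + s *\<^sub>R axis i 1 + t *\<^sub>R axis j 1"
  assumes h: "0 < h"
    and square: "\<And>s t. s \<in> {0..h} \<Longrightarrow> t \<in> {0..h} \<Longrightarrow> p s t \<in> U"
    and di: "\<And>y. y \<in> U \<Longrightarrow> (\<lambda>t. f (y + t *\<^sub>R axis i 1)) differentiable (at 0)"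
    and dji: "\<And>y. y \<in> U \<Longrightarrow> (\<lambda>t. partial i f (y + t *\<^sub>R axis j 1)) differentiable (at 0)"
  shows "\<exists>s t. 0 < s \<and> s < h \<and> 0 < t \<and> t < h \<and>
     f (p h h) - f (p h 0) - f (p 0 h) + f (p 0 0) = h * h * partial j (partial i f) (p s t)"
proof -
  define g where "g s = f (p s h) - f (p s 0)" for s
  have "(g has_real_derivative partial i f (p s h) - partial i f (p s 0)) (at s)"
    if "s \<in> {0..h}" for s
  proof -
    have "((\<lambda>s. f (x + h *\<^sub>R axis j 1 + s *\<^sub>R axis i 1)) has_real_derivative
             partial i f (x + h *\<^sub>R axis j 1 + s *\<^sub>R axis i 1)) (at s)"
      by (rule has_partial_along_line, rule di)
         (use square[OF that, of h] h in \<open>simp add: p_def algebra_simps\<close>)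
    moreover have "((\<lambda>s. f (x + s *\<^sub>R axis i 1)) has_real_derivative partial i f (x + s *\<^sub>R axis i 1)) (at s)"
      by (rule has_partial_along_line, rule di)
         (use square[OF that, of 0] h in \<open>simp add: p_def algebra_simps\<close>)
    ultimately show ?thesis
      unfolding g_def p_def by (auto intro: DERIV_diff simp: algebra_simps)
  qed
  then obtain s where s: "0 < s" "s < h"
    and gs: "g h - g 0 = h * (partial i f (p s h) - partial i f (p s 0))"
    using MVT2[OF h, of g "\<lambda>s. partial i f (p s h) - partial i f (p s 0)"] by auto
  have "((\<lambda>t. partial i f (p s t)) has_real_derivative partial j (partial i f) (p s t)) (at t)"
    if "t \<in> {0..h}" for t
    using has_partial_along_line[of "partial i f" "x + s *\<^sub>R axis i 1" t j] dji square[OF _ that, of s] s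
    by (simp add: p_def)
  then obtain t where t: "0 < t" "t < h"
    and kt: "partial i f (p s h) - partial i f (p s 0) = h * partial j (partial i f) (p s t)"
    using MVT2[OF h, of "\<lambda>t. partial i f (p s t)" "\<lambda>t. partial j (partial i f) (p s t)"] by auto
  have "f (p h h) - f (p h 0) - f (p 0 h) + f (p 0 0) = g h - g 0"
    by (simp add: g_def)
  also have "\<dots> = h * h * partial j (partial i f) (p s t)"
    using gs kt by simp
  finally show ?thesis using s t by blast
qed

(* Schwarz: continuous mixed partials commute.  Both mixed partials are limits of the
   same second difference quotient, by the previous lemma applied in both orders. *)
lemma partial_commute:
  fixes f :: "real^'n \<Rightarrow> real"
  assumes U: "open U" "x \<in> U"
    and di: "\<And>y. y \<in> U \<Longrightarrow> (\<lambda>t. f (y + t *\<^sub>R axis i 1)) differentiable (at 0)"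
    and dj: "\<And>y. y \<in> U \<Longrightarrow> (\<lambda>t. f (y + t *\<^sub>R axis j 1)) differentiable (at 0)"
    and dji: "\<And>y. y \<in> U \<Longrightarrow> (\<lambda>t. partial i f (y + t *\<^sub>R axis j 1)) differentiable (at 0)"
    and dij: "\<And>y. y \<in> U \<Longrightarrow> (\<lambda>t. partial j f (y + t *\<^sub>R axis i 1)) differentiable (at 0)"
    and cji: "continuous_on U (partial j (partial i f))"
    and cij: "continuous_on U (partial i (partial j f))"
  shows "partial j (partial i f) x = partial i (partial j f) x"
proof -
  define A where "A = partial j (partial i f)"
  define B where "B = partial i (partial j f)"
  have "\<bar>A x - B x\<bar> \<le> 2 * e" if e: "e > 0" for e
  proof -
    obtain r0 where r0: "r0 > 0" "ball x r0 \<subseteq> U"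
      using U openE by blast
    obtain r1 where r1: "r1 > 0" "\<And>y. y \<in> U \<Longrightarrow> dist y x < r1 \<Longrightarrow> dist (A y) (A x) < e"
      using cji U(2) e unfolding continuous_on_iff A_def by blast
    obtain r2 where r2: "r2 > 0" "\<And>y. y \<in> U \<Longrightarrow> dist y x < r2 \<Longrightarrow> dist (B y) (B x) < e"
      using cij U(2) e unfolding continuous_on_iff B_def by blast
    define r where "r = min r0 (min r1 r2)"
    define h where "h = r / 3"
    have h: "h > 0" using r0 r1 r2 by (simp add: h_def r_def)
    have near: "dist (x + s *\<^sub>R axis i 1 + t *\<^sub>R axis j 1) x < r"
      if "s \<in> {0..h}" "t \<in> {0..h}" for s t
    proof -
      have "norm (s *\<^sub>R axis i 1 + t *\<^sub>R axis j 1 :: real^'n)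
              \<le> norm (s *\<^sub>R axis i 1 :: real^'n) + norm (t *\<^sub>R axis j 1 :: real^'n)"
        by (rule norm_triangle_ineq)
      also have "\<dots> = \<bar>s\<bar> + \<bar>t\<bar>" by (simp add: norm_axis_1)
      also have "\<dots> < r" using that h by (auto simp: h_def)
      finally show ?thesis by (simp add: dist_norm add.assoc)
    qed
    have inU: "x + s *\<^sub>R axis i 1 + t *\<^sub>R axis j 1 \<in> U"
      if "s \<in> {0..h}" "t \<in> {0..h}" for s t
      using near[OF that] r0(2) by (auto simp: r_def dist_commute)
    have inU': "x + t *\<^sub>R axis j 1 + s *\<^sub>R axis i 1 \<in> U"
      if "t \<in> {0..h}" "s \<in> {0..h}" for s t
      using inU[OF that(2,1)] by (simp add: add_ac)
    obtain s t where st: "0 < s" "s < h" "0 < t" "t < h" and E1: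
      "f (x + h *\<^sub>R axis i 1 + h *\<^sub>R axis j 1) - f (x + h *\<^sub>R axis i 1 + 0 *\<^sub>R axis j 1)
         - f (x + 0 *\<^sub>R axis i 1 + h *\<^sub>R axis j 1) + f (x + 0 *\<^sub>R axis i 1 + 0 *\<^sub>R axis j 1)
       = h * h * A (x + s *\<^sub>R axis i 1 + t *\<^sub>R axis j 1)"
      using mixed_difference_mvt[OF h, of x i j U f] inU di dji unfolding A_def by blast
    obtain t' s' where st': "0 < t'" "t' < h" "0 < s'" "s' < h" and E2:
      "f (x + h *\<^sub>R axis j 1 + h *\<^sub>R axis i 1) - f (x + h *\<^sub>R axis j 1 + 0 *\<^sub>R axis i 1)
         - f (x + 0 *\<^sub>R axis j 1 + h *\<^sub>R axis i 1) + f (x + 0 *\<^sub>R axis j 1 + 0 *\<^sub>R axis i 1)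
       = h * h * B (x + t' *\<^sub>R axis j 1 + s' *\<^sub>R axis i 1)"
      using mixed_difference_mvt[OF h, of x j i U f] inU' dj dij unfolding B_def by blast
    have swap: "x + a *\<^sub>R axis j 1 + b *\<^sub>R axis i 1 = x + b *\<^sub>R axis i 1 + a *\<^sub>R axis j 1"
      for a b by (simp add: algebra_simps)
    have "h * h * A (x + s *\<^sub>R axis i 1 + t *\<^sub>R axis j 1)
        = h * h * B (x + s' *\<^sub>R axis i 1 + t' *\<^sub>R axis j 1)"
      using E1 E2 unfolding swap by linarith
    then have "A (x + s *\<^sub>R axis i 1 + t *\<^sub>R axis j 1) = B (x + s' *\<^sub>R axis i 1 + t' *\<^sub>R axis j 1)"
      using h by simp
    moreover have "dist (A (x + s *\<^sub>R axis i 1 + t *\<^sub>R axis j 1)) (A x) < e"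
      using r1(2) inU near st by (simp add: r_def)
    moreover have "dist (B (x + s' *\<^sub>R axis i 1 + t' *\<^sub>R axis j 1)) (B x) < e"
      using r2(2) inU near st' by (simp add: r_def)
    ultimately show ?thesis
      unfolding dist_real_def by linarith
  qed
  then have "\<bar>A x - B x\<bar> \<le> 0"
    using field_le_epsilon[of "\<bar>A x - B x\<bar>" 0] by (metis add_0 half_gt_zero field_sum_of_halves mult_2)
  then show ?thesis by (simp add: A_def B_def)
qed

definition trilinear :: "('n::finite \<Rightarrow> 'n \<Rightarrow> 'n \<Rightarrow> real) \<Rightarrow> real^'n \<Rightarrow> real^'n \<Rightarrow> real^'n \<Rightarrow> real" where
  "trilinear X u v w = (\<Sum>c\<in>UNIV. \<Sum>a\<in>UNIV. \<Sum>b\<in>UNIV. u $ c * v $ a * w $ b * X c a b)"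

lemma trilinear_rotate:
  "trilinear X v w u = trilinear (\<lambda>c a b. X a b c) u v w"
proof -
  have "trilinear X v w u = (\<Sum>c\<in>UNIV. \<Sum>a\<in>UNIV. \<Sum>b\<in>UNIV. u $ b * v $ c * w $ a * X c a b)"
    unfolding trilinear_def by (simp add: mult_ac)
  also have "\<dots> = (\<Sum>b\<in>UNIV. \<Sum>c\<in>UNIV. \<Sum>a\<in>UNIV. u $ b * v $ c * w $ a * X c a b)"
    by (subst sum.swap, subst (2) sum.swap) (rule refl)
  finally show ?thesis unfolding trilinear_def .
qed

lemma trilinear_add:
  "trilinear X u v w + trilinear Y u v w = trilinear (\<lambda>c a b. X c a b + Y c a b) u v w"
  unfolding trilinear_def by (simp add: sum.distrib distrib_left)

lemma sum_axis:
  "(\<Sum>i\<in>UNIV. (axis k 1 :: real^'n::finite) $ i * F i) = F k"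
proof -
  have "(\<Sum>i\<in>UNIV. (axis k 1 :: real^'n) $ i * F i) = (\<Sum>i\<in>UNIV. if i = k then F i else 0)"
    by (rule sum.cong) (auto simp: axis_def)
  then show ?thesis by simp
qed

lemma trilinear_axis:
  "trilinear X (axis c 1) (axis a 1) (axis b 1) = X c a b"
proof -
  have "trilinear X (axis c 1) (axis a 1) (axis b 1)
      = (\<Sum>i\<in>UNIV. axis c 1 $ i * (\<Sum>j\<in>UNIV. axis a 1 $ j * (\<Sum>k\<in>UNIV. axis b 1 $ k * X i j k)))"
    unfolding trilinear_def by (simp add: sum_distrib_left mult.assoc)
  then show ?thesis by (simp only: sum_axis)
qed

lemma skew_matrix_vector:
  fixes P :: "real^'n^'n"
  assumes skew: "\<And>a b. P $ a $ b = - P $ b $ a"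
  shows "P *v w = - (w v* P)"
proof -
  have "P $ i $ j * w $ j = - (w $ j * P $ j $ i)" for i j
    using skew[of i j] by simp
  then show ?thesis
    by (simp add: vec_eq_iff matrix_vector_mult_def vector_matrix_mult_def sum_negf[symmetric])
qed

lemma symmetric_form:
  fixes H :: "real^'n^'n"
  assumes "transpose H = H"
  shows "p \<bullet> (H *v q) = q \<bullet> (H *v p)"
  by (metis assms dot_lmul_matrix inner_commute transpose_matrix_vector)

lemma rows_form:
  fixes H :: "real^'n^'n"
  shows "(\<Sum>l\<in>UNIV. p $ l * (H $ l \<bullet> q)) = p \<bullet> (H *v q)"
  by (simp add: inner_vec_def matrix_vector_mult_def)

(* The tensor S(c,a,b) = sum_l P_cl dP_l,ab + cyclic, where dP l is the derivative of
   the matrix P along e_l; the Jacobiator is the trilinear form of S. *)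
definition jacobi_tensor :: "real^'n^'n \<Rightarrow> ('n::finite \<Rightarrow> real^'n^'n) \<Rightarrow> 'n \<Rightarrow> 'n \<Rightarrow> 'n \<Rightarrow> real" where
  "jacobi_tensor P dP c a b =
     (\<Sum>l\<in>UNIV. P $ c $ l * dP l $ a $ b + P $ a $ l * dP l $ b $ c + P $ b $ l * dP l $ c $ a)"

(* The gradient of the bracket {g,h} at a point, expressed through the first and second
   derivatives u, Hu of g and v, Hv of h, the matrix P and its derivatives dP. *)
definition bracket_gradient ::
    "real^'n^'n \<Rightarrow> ('n::finite \<Rightarrow> real^'n^'n) \<Rightarrow> real^'n \<Rightarrow> real^'n^'n \<Rightarrow> real^'n \<Rightarrow> real^'n^'n \<Rightarrow> real^'n" where
  "bracket_gradient P dP u Hu v Hv = (\<chi> l. Hu $ l \<bullet> (P *v v) + u \<bullet> (dP l *v v) + u \<bullet> (P *v Hv $ l))"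

lemma sum_rotate3:
  "(\<Sum>c\<in>A. \<Sum>a\<in>B. \<Sum>b\<in>C. F c a b) = (\<Sum>a\<in>B. \<Sum>b\<in>C. \<Sum>c\<in>A. F c a b)"
  by (subst sum.swap, subst (2) sum.swap) (rule refl)

(* The only terms of the Jacobiator that survive: those containing dP. *)
lemma contracted_derivative_trilinear:
  "(\<Sum>l\<in>UNIV. (u v* P) $ l * (v \<bullet> (dP l *v w)))
     = trilinear (\<lambda>c a b. \<Sum>l\<in>UNIV. P $ c $ l * dP l $ a $ b) u v w"
proof -
  define F where "F l c a b = u $ c * v $ a * w $ b * (P $ c $ l * dP l $ a $ b)" for l c a b
  have "(\<Sum>l\<in>UNIV. (u v* P) $ l * (v \<bullet> (dP l *v w)))
      = (\<Sum>l\<in>UNIV. \<Sum>a\<in>UNIV. \<Sum>b\<in>UNIV. \<Sum>c\<in>UNIV. F l c a b)"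
    by (simp add: F_def vector_matrix_mult_def matrix_vector_mult_def inner_vec_def
        sum_distrib_left sum_distrib_right mult_ac)
  also have "\<dots> = (\<Sum>l\<in>UNIV. \<Sum>c\<in>UNIV. \<Sum>a\<in>UNIV. \<Sum>b\<in>UNIV. F l c a b)"
    by (rule sum.cong[OF refl], rule sum_rotate3[symmetric])
  also have "\<dots> = (\<Sum>c\<in>UNIV. \<Sum>l\<in>UNIV. \<Sum>a\<in>UNIV. \<Sum>b\<in>UNIV. F l c a b)"
    by (rule sum.swap)
  also have "\<dots> = (\<Sum>c\<in>UNIV. \<Sum>a\<in>UNIV. \<Sum>b\<in>UNIV. \<Sum>l\<in>UNIV. F l c a b)"
    by (rule sum.cong[OF refl], rule sum_rotate3)
  finally show ?thesis
    unfolding trilinear_def F_def by (simp add: sum_distrib_left)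
qed

(* The algebraic core: for skew P and symmetric Hessians the second-derivative terms of
   the cyclic sum cancel in pairs, leaving the trilinear form of the Jacobi tensor. *)
lemma jacobi_algebra:
  fixes P :: "real^'n::finite^'n" and dP :: "'n \<Rightarrow> real^'n^'n"
  assumes skew: "\<And>a b. P $ a $ b = - P $ b $ a"
    and sym: "transpose Hu = Hu" "transpose Hv = Hv" "transpose Hw = Hw"
  shows "u \<bullet> (P *v bracket_gradient P dP v Hv w Hw) + v \<bullet> (P *v bracket_gradient P dP w Hw u Hu)
           + w \<bullet> (P *v bracket_gradient P dP u Hu v Hv)
         = trilinear (jacobi_tensor P dP) u v w"
proof -
  define X where "X c a b = (\<Sum>l\<in>UNIV. P $ c $ l * dP l $ a $ b)" for c a b
  have expand: "u \<bullet> (P *v bracket_gradient P dP v Hv w Hw)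
      = - ((u v* P) \<bullet> (Hv *v (w v* P))) + trilinear X u v w + (u v* P) \<bullet> (Hw *v (v v* P))"
    for u v w and Hv Hw :: "real^'n^'n"
  proof -
    have "u \<bullet> (P *v bracket_gradient P dP v Hv w Hw) = (u v* P) \<bullet> bracket_gradient P dP v Hv w Hw"
      by (simp add: dot_lmul_matrix)
    also have "\<dots> = (\<Sum>l\<in>UNIV. (u v* P) $ l * (Hv $ l \<bullet> (P *v w)))
        + (\<Sum>l\<in>UNIV. (u v* P) $ l * (v \<bullet> (dP l *v w)))
        + (\<Sum>l\<in>UNIV. (u v* P) $ l * (v \<bullet> (P *v Hw $ l)))"
      by (simp add: inner_vec_def bracket_gradient_def distrib_left sum.distrib)
    also have "(\<Sum>l\<in>UNIV. (u v* P) $ l * (Hv $ l \<bullet> (P *v w))) = - ((u v* P) \<bullet> (Hv *v (w v* P)))"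
      by (simp add: skew_matrix_vector[OF skew] rows_form[symmetric] sum_negf)
    also have "(\<Sum>l\<in>UNIV. (u v* P) $ l * (v \<bullet> (P *v Hw $ l))) = (u v* P) \<bullet> (Hw *v (v v* P))"
    proof -
      have "v \<bullet> (P *v z) = z \<bullet> (v v* P)" for z
        by (metis dot_lmul_matrix inner_commute)
      then show ?thesis by (simp only: rows_form)
    qed
    finally show ?thesis
      unfolding contracted_derivative_trilinear X_def .
  qed
  have "u \<bullet> (P *v bracket_gradient P dP v Hv w Hw) + v \<bullet> (P *v bracket_gradient P dP w Hw u Hu)
          + w \<bullet> (P *v bracket_gradient P dP u Hu v Hv)
        = trilinear X u v w + trilinear X v w u + trilinear X w u v"
    unfolding expand
    using symmetric_form[OF sym(1), of "v v* P" "w v* P"] symmetric_form[OF sym(2), of "u v* P" "w v* P"]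
      symmetric_form[OF sym(3), of "u v* P" "v v* P"]
    by simp
  also have "\<dots> = trilinear X u v w + trilinear (\<lambda>c a b. X a b c) u v w + trilinear (\<lambda>c a b. X b c a) u v w"
  proof -
    have "trilinear X v w u = trilinear (\<lambda>c a b. X a b c) u v w"
      by (rule trilinear_rotate)
    moreover have "trilinear X w u v = trilinear (\<lambda>c a b. X a b c) v w u"
      by (rule trilinear_rotate)
    moreover have "\<dots> = trilinear (\<lambda>c a b. X b c a) u v w"
      by (rule trilinear_rotate)
    ultimately show ?thesis by simp
  qed
  also have "\<dots> = trilinear (jacobi_tensor P dP) u v w"
    unfolding trilinear_add jacobi_tensor_def X_def by (simp add: sum.distrib)
  finally show ?thesis .
qed

lemma smooth_on_line_differentiable:
  "smooth_on U f \<Longrightarrow> y \<in> U \<Longrightarrow> (\<lambda>t. f (y + t *\<^sub>R axis i 1)) differentiable (at 0)"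
  unfolding smooth_on_def by (metis iter_partial.simps(1))

lemma smooth_on_partial_line_differentiable:
  "smooth_on U f \<Longrightarrow> y \<in> U \<Longrightarrow> (\<lambda>t. partial a f (y + t *\<^sub>R axis i 1)) differentiable (at 0)"
  unfolding smooth_on_def by (metis iter_partial.simps)

lemma smooth_on_second_partial_continuous:
  "smooth_on U f \<Longrightarrow> continuous_on U (partial j (partial i f))"
  unfolding smooth_on_def by (metis iter_partial.simps)

definition hessian :: "(real^'n::finite \<Rightarrow> real) \<Rightarrow> real^'n \<Rightarrow> real^'n^'n" where
  "hessian f x = (\<chi> l a. partial l (partial a f) x)"

lemma hessian_symmetric:
  assumes "open U" "x \<in> U" "smooth_on U f"
  shows "transpose (hessian f x) = hessian f x"
proof -
  have "partial j (partial i f) x = partial i (partial j f) x" for i j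
    using assms
    by (intro partial_commute) (auto intro: smooth_on_line_differentiable
        smooth_on_partial_line_differentiable smooth_on_second_partial_continuous)
  then show ?thesis
    by (simp add: vec_eq_iff transpose_def hessian_def)
qed

definition bracket :: "(real^'n::finite \<Rightarrow> real^'n^'n) \<Rightarrow> (real^'n \<Rightarrow> real) \<Rightarrow> (real^'n \<Rightarrow> real) \<Rightarrow> real^'n \<Rightarrow> real" where
  "bracket P f g x = grad f x \<bullet> (P x *v grad g x)"

lemma grad_component: "grad f x $ i = partial i f x"
  by (simp add: grad_def)

lemma bracket_sum:
  "bracket P f g y = (\<Sum>a\<in>UNIV. \<Sum>b\<in>UNIV. partial a f y * P y $ a $ b * partial b g y)"
  unfolding bracket_def inner_vec_def matrix_vector_mult_def grad_def
  by (simp add: sum_distrib_left mult_ac)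

lemma partial_bracket:
  fixes P :: "real^'n::finite \<Rightarrow> real^'n^'n"
  assumes dg: "\<And>a. (\<lambda>t. partial a g (x + t *\<^sub>R axis l 1)) differentiable (at 0)"
    and dh: "\<And>a. (\<lambda>t. partial a h (x + t *\<^sub>R axis l 1)) differentiable (at 0)"
    and dP: "\<And>a b. ((\<lambda>t. P (x + t *\<^sub>R axis l 1) $ a $ b) has_real_derivative dP $ a $ b) (at 0)"
  shows "partial l (bracket P g h) x = hessian g x $ l \<bullet> (P x *v grad h x)
           + grad g x \<bullet> (dP *v grad h x) + grad g x \<bullet> (P x *v hessian h x $ l)"
proof -
  let ?y = "\<lambda>t. x + t *\<^sub>R axis l 1"
  have "((\<lambda>t. partial a g (?y t) * P (?y t) $ a $ b * partial b h (?y t)) has_real_derivative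
          partial l (partial a g) x * P x $ a $ b * partial b h x
          + partial a g x * dP $ a $ b * partial b h x
          + partial a g x * P x $ a $ b * partial l (partial b h) x) (at 0)" for a b
    by (rule DERIV_cong, rule DERIV_mult[OF DERIV_mult[OF has_partial[OF dg] dP] has_partial[OF dh]])
       (simp add: algebra_simps)
  then have "partial l (bracket P g h) x
      = (\<Sum>a\<in>UNIV. \<Sum>b\<in>UNIV. partial l (partial a g) x * P x $ a $ b * partial b h x
          + partial a g x * dP $ a $ b * partial b h x
          + partial a g x * P x $ a $ b * partial l (partial b h) x)"
    unfolding bracket_sum by (intro partial_eqI DERIV_sum)
  then show ?thesis
    by (simp add: hessian_def grad_def inner_vec_def matrix_vector_mult_def
        sum.distrib sum_distrib_left mult_ac)
qed

lemma jacobiator_formula: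
  fixes P :: "real^'n::finite \<Rightarrow> real^'n^'n"
  assumes U: "open U" "x \<in> U"
    and smooth: "smooth_on U f" "smooth_on U g" "smooth_on U h"
    and skew: "\<And>a b. P x $ a $ b = - P x $ b $ a"
    and dP: "\<And>l a b. ((\<lambda>t. P (x + t *\<^sub>R axis l 1) $ a $ b) has_real_derivative dP l $ a $ b) (at 0)"
  shows "bracket P f (bracket P g h) x + bracket P g (bracket P h f) x + bracket P h (bracket P f g) x
       = trilinear (jacobi_tensor (P x) dP) (grad f x) (grad g x) (grad h x)"
proof -
  have grad_bracket: "grad (bracket P u v) x
      = bracket_gradient (P x) dP (grad u x) (hessian u x) (grad v x) (hessian v x)"
    if "smooth_on U u" "smooth_on U v" for u v
    using partial_bracket[OF smooth_on_partial_line_differentiable[OF that(1) U(2)]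
        smooth_on_partial_line_differentiable[OF that(2) U(2)] dP]
    by (simp add: vec_eq_iff bracket_gradient_def grad_component)
  show ?thesis
    unfolding bracket_def[of P _ "bracket P _ _"] grad_bracket[OF smooth(2,3)]
      grad_bracket[OF smooth(3,1)] grad_bracket[OF smooth(1,2)]
    by (rule jacobi_algebra[OF skew hessian_symmetric[OF U smooth(1)]
          hessian_symmetric[OF U smooth(2)] hessian_symmetric[OF U smooth(3)]])
qed

(* Finite index bookkeeping for R^6 (the library covers dimensions up to 4). *)
lemma exhaust_6:
  fixes x :: 6
  shows "x = 1 \<or> x = 2 \<or> x = 3 \<or> x = 4 \<or> x = 5 \<or> x = 6"
proof (induct x)
  case (of_int z)
  then have "z = 0 \<or> z = 1 \<or> z = 2 \<or> z = 3 \<or> z = 4 \<or> z = 5" by fastforce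
  then show ?case by auto
qed

lemma UNIV_6: "UNIV = {1, 2, 3, 4, 5, 6 :: 6}"
  using exhaust_6 by auto

lemma sum_6: "sum f (UNIV :: 6 set) = f 1 + f 2 + f 3 + f 4 + f 5 + f 6"
  unfolding UNIV_6 by (simp add: ac_simps)

lemma vector_6 [simp]:
  "(vector [a, b, c, d, e, f] :: ('a::zero)^6) $ 1 = a"
  "(vector [a, b, c, d, e, f] :: ('a::zero)^6) $ 2 = b"
  "(vector [a, b, c, d, e, f] :: ('a::zero)^6) $ 3 = c"
  "(vector [a, b, c, d, e, f] :: ('a::zero)^6) $ 4 = d"
  "(vector [a, b, c, d, e, f] :: ('a::zero)^6) $ 5 = e"
  "(vector [a, b, c, d, e, f] :: ('a::zero)^6) $ 6 = f"
  unfolding vector_def by simp_all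

definition se3_matrix :: "real^6 \<Rightarrow> real^6^6" where
  "se3_matrix w = vector [
      vector [0, -w$3, w$2, 0, -w$6, w$5],
      vector [w$3, 0, -w$1, w$6, 0, -w$4],
      vector [-w$2, w$1, 0, -w$5, w$4, 0],
      vector [0, -w$6, w$5, 0, 0, 0],
      vector [w$6, 0, -w$4, 0, 0, 0],
      vector [-w$5, w$4, 0, 0, 0, 0]]"

lemma se3_matrix_skew: "se3_matrix w $ a $ b = - se3_matrix w $ b $ a"
  using exhaust_6[of a] exhaust_6[of b]
  by (elim disjE) (simp_all add: se3_matrix_def)

lemma has_derivative_se3_matrix:
  assumes "\<And>k. ((\<lambda>t. w t $ k) has_real_derivative w' $ k) (at 0)"
  shows "((\<lambda>t. se3_matrix (w t) $ a $ b) has_real_derivative se3_matrix w' $ a $ b) (at 0)"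
proof -
  have "((\<lambda>t. - (w t $ k)) has_real_derivative - (w' $ k)) (at 0)" for k
    using DERIV_minus[OF assms] .
  with assms show ?thesis
    using exhaust_6[of a] exhaust_6[of b]
    by (elim disjE) (simp_all add: se3_matrix_def)
qed

definition lie_poisson_point :: "(real^3 \<Rightarrow> real^3) \<Rightarrow> real^6 \<Rightarrow> real^6" where
  "lie_poisson_point mu x =
     vector [x$1 + mu (gv x) $ 1, x$2 + mu (gv x) $ 2, x$3 + mu (gv x) $ 3, x$4, x$5, x$6]"

lemma Pi_mu_se3: "Pi_mu mu x = se3_matrix (lie_poisson_point mu x)"
  unfolding Pi_mu_def se3_matrix_def lie_poisson_point_def Let_def by simp

definition jac :: "(real^3 \<Rightarrow> real^3) \<Rightarrow> real^3 \<Rightarrow> 3 \<Rightarrow> 3 \<Rightarrow> real" where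
  "jac mu y j k = partial j (\<lambda>z. mu z $ k) y"

(* The derivative of mu_k(gamma(x)) along the axis e_l of R^6, given q j k = d_j mu_k:
   zero along the M-axes, q (l-3) k along the gamma-axes. *)
definition gamma_rate :: "(3 \<Rightarrow> 3 \<Rightarrow> real) \<Rightarrow> 6 \<Rightarrow> 3 \<Rightarrow> real" where
  "gamma_rate q l k = (if l = 4 then q 1 k else if l = 5 then q 2 k else if l = 6 then q 3 k else 0)"

definition Pi_deriv :: "(3 \<Rightarrow> 3 \<Rightarrow> real) \<Rightarrow> 6 \<Rightarrow> real^6^6" where
  "Pi_deriv q l = se3_matrix (axis l 1 + vector [gamma_rate q l 1, gamma_rate q l 2, gamma_rate q l 3, 0, 0, 0])"

lemma gv_line: "gv (x + t *\<^sub>R v) = gv x + t *\<^sub>R gv v"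
  unfolding gv_def by (simp add: vec_eq_iff forall_3)

lemma gv_axis:
  "gv (axis 1 1) = 0" "gv (axis 2 1) = 0" "gv (axis 3 1) = 0"
  "gv (axis 4 1) = axis 1 1" "gv (axis 5 1) = axis 2 1" "gv (axis 6 1) = axis 3 1"
  unfolding gv_def by (simp_all add: vec_eq_iff forall_3 axis_def)

lemma has_derivative_mu_along_axis:
  assumes smooth: "\<And>k. smooth_on D (\<lambda>y. mu y $ k)" and x: "gv x \<in> D"
  shows "((\<lambda>t. mu (gv (x + t *\<^sub>R axis l 1)) $ k) has_real_derivative gamma_rate (jac mu (gv x)) l k) (at 0)"
proof -
  have "((\<lambda>t. mu (gv x + t *\<^sub>R axis j 1) $ k) has_real_derivative jac mu (gv x) j k) (at 0)" for j
    unfolding jac_def by (rule has_partial[OF smooth_on_line_differentiable[OF smooth x]])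
  then show ?thesis
    unfolding gv_line using exhaust_6[of l]
    by (elim disjE) (simp_all add: gv_axis gamma_rate_def)
qed

lemma has_derivative_Pi_mu:
  assumes smooth: "\<And>k. smooth_on D (\<lambda>y. mu y $ k)" and x: "gv x \<in> D"
  shows "((\<lambda>t. Pi_mu mu (x + t *\<^sub>R axis l 1) $ a $ b) has_real_derivative Pi_deriv (jac mu (gv x)) l $ a $ b) (at 0)"
  unfolding Pi_mu_se3 Pi_deriv_def
proof (rule has_derivative_se3_matrix)
  fix k :: 6
  have coord: "((\<lambda>t. x $ j + t * axis l 1 $ j) has_real_derivative axis l 1 $ j) (at 0)" for j
    by (auto intro!: derivative_eq_intros)
  note mu = has_derivative_mu_along_axis[OF smooth x]
  show "((\<lambda>t. lie_poisson_point mu (x + t *\<^sub>R axis l 1) $ k) has_real_derivative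
      (axis l 1 + vector [gamma_rate (jac mu (gv x)) l 1, gamma_rate (jac mu (gv x)) l 2,
         gamma_rate (jac mu (gv x)) l 3, 0, 0, 0]) $ k) (at 0)"
    using exhaust_6[of k]
    by (elim disjE) (simp_all add: lie_poisson_point_def coord DERIV_add[OF coord mu])
qed

lemma gamma_dot_curl:
  "y \<bullet> curl3 mu y = y$1 * (jac mu y 2 3 - jac mu y 3 2) + y$2 * (jac mu y 3 1 - jac mu y 1 3)
     + y$3 * (jac mu y 1 2 - jac mu y 2 1)"
  unfolding inner_vec_def sum_3 curl3_def jac_def by simp

lemma jacobi_tensor_Pi_mu_123:
  "jacobi_tensor (Pi_mu mu x) (Pi_deriv (jac mu (gv x))) 1 2 3 = - (gv x \<bullet> curl3 mu (gv x))"
  unfolding gamma_dot_curl Pi_mu_se3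
  by (simp add: jacobi_tensor_def sum_6 Pi_deriv_def se3_matrix_def lie_poisson_point_def
      axis_def gamma_rate_def gv_def algebra_simps)

lemma jacobi_tensor_Pi_mu_vanishes:
  assumes "gv x \<bullet> curl3 mu (gv x) = 0"
  shows "jacobi_tensor (Pi_mu mu x) (Pi_deriv (jac mu (gv x))) c a b = 0"
proof -
  let ?q = "jac mu (gv x)"
  have K: "x$4 * ?q 2 3 + x$5 * ?q 3 1 + x$6 * ?q 1 2 = x$4 * ?q 3 2 + x$5 * ?q 1 3 + x$6 * ?q 2 1"
    using assms unfolding gamma_dot_curl by (simp add: gv_def algebra_simps)
  show ?thesis
    unfolding Pi_mu_se3 using exhaust_6[of c] exhaust_6[of a] exhaust_6[of b]
    apply (elim disjE)
    apply (simp_all add: jacobi_tensor_def sum_6 Pi_deriv_def se3_matrix_def lie_poisson_point_def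
        axis_def gamma_rate_def algebra_simps)
    using K by (simp_all add: algebra_simps)
qed

lemma has_derivative_coordinate_line:
  "((\<lambda>t. (x + t *\<^sub>R v) $ k) has_real_derivative v $ k) (at 0)"
proof -
  have "((\<lambda>t. x $ k + t * v $ k) has_real_derivative v $ k) (at 0)"
    by (auto intro!: derivative_eq_intros)
  then show ?thesis by simp
qed

lemma partial_coordinate: "partial i (\<lambda>y::real^'n::finite. y $ k) x = axis i 1 $ k"
  by (rule partial_eqI) (rule has_derivative_coordinate_line)

lemma grad_coordinate: "grad (\<lambda>y::real^'n::finite. y $ k) x = axis k 1"
  by (simp add: grad_def partial_coordinate vec_eq_iff axis_def)

lemma iter_partial_coordinate:
  "iter_partial is (\<lambda>y::real^'n::finite. y $ k) = (\<lambda>y. y $ k)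
   \<or> (\<exists>c. iter_partial is (\<lambda>y::real^'n. y $ k) = (\<lambda>y. c))"
proof (induction "is")
  case Nil
  then show ?case by simp
next
  case (Cons i "is")
  have "partial i (\<lambda>y::real^'n. c) = (\<lambda>y. 0)" for c
    by (intro ext partial_eqI) simp
  with Cons show ?case
    by (auto simp: partial_coordinate[abs_def])
qed

lemma smooth_on_coordinate: "smooth_on U (\<lambda>y::real^'n::finite. y $ k)"
  unfolding smooth_on_def
proof (intro allI conjI ballI)
  fix "is" :: "'n list" and i :: 'n and x :: "real^'n"
  have line: "(\<lambda>t. (x + t *\<^sub>R axis i 1) $ k) differentiable (at 0)"
    by (rule differentiableI[OF has_field_derivative_imp_has_derivative[OF has_derivative_coordinate_line]])
  consider "iter_partial is (\<lambda>y::real^'n. y $ k) = (\<lambda>y. y $ k)"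
    | c where "iter_partial is (\<lambda>y::real^'n. y $ k) = (\<lambda>y. c)"
    using iter_partial_coordinate by blast
  then show "continuous_on U (iter_partial is (\<lambda>y::real^'n. y $ k))"
    and "(\<lambda>t. iter_partial is (\<lambda>y::real^'n. y $ k) (x + t *\<^sub>R axis i 1)) differentiable (at 0)"
    by (cases, simp_all add: line continuous_on_component[OF continuous_on_id])+
qed

lemma open_gamma_preimage:
  assumes "open D"
  shows "open {x. gv x \<in> D}"
proof -
  have "linear gv"
    by (rule linearI) (simp_all add: gv_def vec_eq_iff forall_3)
  then have "continuous_on UNIV gv"
    by (simp add: linear_continuous_on linear_conv_bounded_linear)
  then show ?thesis
    using open_vimage[OF assms] by (simp add: vimage_def)
qed

lemma pbracket_eq_bracket: "pbracket mu = bracket (Pi_mu mu)"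
  by (intro ext) (simp add: pbracket_def bracket_def)

lemma jacobiator_Pi_mu:
  assumes "open D" and smooth: "\<And>k. smooth_on D (\<lambda>y. mu y $ k)" and x: "gv x \<in> D"
    and "smooth_on {x. gv x \<in> D} f" "smooth_on {x. gv x \<in> D} g" "smooth_on {x. gv x \<in> D} h"
  shows "pbracket mu f (pbracket mu g h) x + pbracket mu g (pbracket mu h f) x
           + pbracket mu h (pbracket mu f g) x
       = trilinear (jacobi_tensor (Pi_mu mu x) (Pi_deriv (jac mu (gv x)))) (grad f x) (grad g x) (grad h x)"
proof -
  have skew: "Pi_mu mu x $ a $ b = - Pi_mu mu x $ b $ a" for a b
    unfolding Pi_mu_se3 by (rule se3_matrix_skew)
  show ?thesis
    unfolding pbracket_eq_bracket
    using open_gamma_preimage[OF assms(1)] x assms(4-6)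
    by (intro jacobiator_formula[OF _ _ _ _ _ skew has_derivative_Pi_mu[OF smooth x]]) simp_all
qed

lemma div_cross3:
  assumes smooth: "\<And>k. smooth_on D (\<lambda>y. mu y $ k)" and y: "y \<in> D"
  shows "div3 (\<lambda>z. cross3 z (mu z)) y = - (y \<bullet> curl3 mu y)"
proof -
  have mu: "((\<lambda>t. mu (y + t *\<^sub>R axis i 1) $ k) has_real_derivative jac mu y i k) (at 0)" for i k
    unfolding jac_def by (rule has_partial[OF smooth_on_line_differentiable[OF smooth y]])
  note coord = has_derivative_coordinate_line
  have product: "partial i (\<lambda>z. z$j * mu z $ k - z$p * mu z $ r) y
     = axis i 1 $ j * mu y $ k + y $ j * jac mu y i k - (axis i 1 $ p * mu y $ r + y $ p * jac mu y i r)"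
    for i j k p r
    by (rule partial_eqI, rule DERIV_cong, rule DERIV_diff[OF DERIV_mult[OF coord mu] DERIV_mult[OF coord mu]])
       simp
  have components: "(\<lambda>z. cross3 z (mu z) $ 1) = (\<lambda>z. z$2 * mu z $ 3 - z$3 * mu z $ 2)"
    "(\<lambda>z. cross3 z (mu z) $ 2) = (\<lambda>z. z$3 * mu z $ 1 - z$1 * mu z $ 3)"
    "(\<lambda>z. cross3 z (mu z) $ 3) = (\<lambda>z. z$1 * mu z $ 2 - z$2 * mu z $ 1)"
    by (simp_all add: cross3_def)
  show ?thesis
    unfolding div3_def sum_3 components product gamma_dot_curl
    by (simp add: axis_def algebra_simps)
qed

(* The Jacobi identity for the coordinates M1, M2, M3 reads
   gamma . curl mu = 0; conversely this condition kills the Jacobi tensor. *)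
theorem mainTheorem5:
  fixes D :: "(real^3) set" and mu :: "real^3 \<Rightarrow> real^3"
  assumes "open D" and "0 \<notin> D"
    and "\<And>k. smooth_on D (\<lambda>y. mu y $ k)"
  shows "(defines_poisson mu D \<longleftrightarrow> (\<forall>y\<in>D. y \<bullet> curl3 mu y = 0))
       \<and> ((\<forall>y\<in>D. y \<bullet> curl3 mu y = 0) \<longleftrightarrow> (\<forall>y\<in>D. div3 (\<lambda>z. cross3 z (mu z)) y = 0))"
proof (intro conjI iffI)
  note jacobiator = jacobiator_Pi_mu[OF assms(1,3)]
  show "\<forall>y\<in>D. y \<bullet> curl3 mu y = 0" if poisson: "defines_poisson mu D"
  proof
    fix y assume y: "y \<in> D"
    define x where "x = (vector [0, 0, 0, y$1, y$2, y$3] :: real^6)"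
    have gx: "gv x = y"
      by (simp add: x_def gv_def vec_eq_iff forall_3)
    have "pbracket mu (\<lambda>x. x$1) (pbracket mu (\<lambda>x. x$2) (\<lambda>x. x$3)) x
        + pbracket mu (\<lambda>x. x$2) (pbracket mu (\<lambda>x. x$3) (\<lambda>x. x$1)) x
        + pbracket mu (\<lambda>x. x$3) (pbracket mu (\<lambda>x. x$1) (\<lambda>x. x$2)) x = 0"
      using poisson y gx smooth_on_coordinate unfolding defines_poisson_def by blast
    then have "jacobi_tensor (Pi_mu mu x) (Pi_deriv (jac mu (gv x))) 1 2 3 = 0"
      using y gx by (simp add: jacobiator smooth_on_coordinate grad_coordinate trilinear_axis)
    then show "y \<bullet> curl3 mu y = 0"
      using jacobi_tensor_Pi_mu_123[of mu x] gx by simp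
  qed
  show "defines_poisson mu D" if curl: "\<forall>y\<in>D. y \<bullet> curl3 mu y = 0"
    unfolding defines_poisson_def
  proof (intro allI impI)
    fix f g h x
    assume "smooth_on {x. gv x \<in> D} f \<and> smooth_on {x. gv x \<in> D} g \<and> smooth_on {x. gv x \<in> D} h"
      and x: "gv x \<in> D"
    then show "pbracket mu f (pbracket mu g h) x + pbracket mu g (pbracket mu h f) x
        + pbracket mu h (pbracket mu f g) x = 0"
      using curl by (simp add: jacobiator jacobi_tensor_Pi_mu_vanishes trilinear_def)
  qed
  show "\<forall>y\<in>D. div3 (\<lambda>z. cross3 z (mu z)) y = 0" if "\<forall>y\<in>D. y \<bullet> curl3 mu y = 0"
    using that div_cross3[OF assms(3)] by simp
  show "\<forall>y\<in>D. y \<bullet> curl3 mu y = 0" if "\<forall>y\<in>D. div3 (\<lambda>z. cross3 z (mu z)) y = 0"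
    using that div_cross3[OF assms(3)] by simp
qed

end
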